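(* Let $n\ge4$ be even, $f>0$, and let $(\mathcal{S},\Gamma)$ be the caterpillar species tree described in the context. Let $\mathcal{T}_1$ be a gene tree drawn from the multispecies coalescent on $(\mathcal{S},\Gamma)$. Then $$\mathrm{Var}\big[d_{\mathrm g}^{\mathcal{T}_1}(a,b)\big]\ \ge\ \frac{n-2}{2}\,\mathrm{Var}\big[X_1\,\big|\,\mathcal{F}_1\big]\;\mathbf{P}[\mathcal{F}].$$
   Context: The caterpillar species tree: for even $n\ge4$, $\mathcal{S}$ is a rooted binary tree with leaves $a,b,x_1,\dots,x_{n/2-1},y_1,\dots,y_{n/2-1}$. Its backbone is the path $(a,w_1),(w_1,z_1),(z_1,w_2),(w_2,z_2),\dots,(w_{(n-2)/2},z_{(n-2)/2}),(z_{(n-2)/2},r)$ from leaf $a$ to the root $r=w_{n/2}$; each $w_i$ ($1\le i\le n/2-1$) has a pendant edge $(w_i,x_i)$ to leaf $x_i$, each $z_i$ has a pendant edge $(z_i,y_i)$ to leaf $y_i$, and $r$ has a pendant edge $(r,b)$ to leaf $b$. Each edge $(w_i,z_i)$ has length $f$; every other edge has length $g=4\log n$. The $i$-th block is the two-edge path $\{(w_i,z_i),(z_i,w_{i+1})\}$, $i=1,\dots,(n-2)/2$. Multispecies coalescent: one lineage per leaf; going backwards in time, within each branch each pair of lineages coalesces at rate 1 independently for the length of the branch; lineages of child populations are pooled at internal nodes; above the root coalescence continues until one lineage remains; $\mathcal{T}_1$ is the resulting unrooted topology and $d_{\mathrm g}^{\mathcal{T}_1}(a,b)$ the number of edges on the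 $a$–$b$ path in it. $\mathcal{F}_i$ is the event that all lineages entering $(z_i,w_{i+1})$ have coalesced into one lineage before reaching $w_{i+1}$, and $\mathcal{F}=\bigcap_i\mathcal{F}_i$. $X_i$ is the number of coalescence events occurring in the populations $(w_i,z_i)$ or $(z_i,w_{i+1})$ (the $i$-th block) in which one of the two merging lineages is ancestral to $a$ (i.e. the number of lineages coalescing into the path between $a$ and $b$ on the $i$-th block). *)

theory Defs
  imports "HOL-Probability.Probability"
begin

text \<open>Nd v l sl r sr: internal node labelled v with children l, r; sl, sr are the
  lengths of the edges from v to l and to r.  The population of an edge is named by
  the label of its lower endpoint (child).\<close>

datatype 'l stree = Lf 'l | Nd 'l "'l stree" real "'l stree" real

primrec label :: "'l stree \<Rightarrow> 'l" where
  "label (Lf x) = x"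
| "label (Nd v l sl r sr) = v"

primrec leaves :: "'l stree \<Rightarrow> 'l set" where
  "leaves (Lf x) = {x}"
| "leaves (Nd v l sl r sr) = leaves l \<union> leaves r"

text \<open>Probability that, starting with k lineages, at least m coalescences happen within
  time t: the sum of the first m exponential holding times (rates C(k,2), C(k-1,2), ...)
  is at most t.  At most k-1 coalescences can ever happen.\<close>

definition hold_le :: "nat \<Rightarrow> real \<Rightarrow> nat \<Rightarrow> real" where
  "hold_le k t m =
     (if m = 0 then 1
      else if m < k then
        measure (PiM {..<m} (\<lambda>j. density lborel (exponential_density (real ((k - j) choose 2)))))
          {x \<in> space (PiM {..<m} (\<lambda>j. density lborel (exponential_density (real ((k - j) choose 2))))).
             (\<Sum>j<m. x j) \<le> t}
      else 0)"

definition coal_count :: "nat \<Rightarrow> real \<Rightarrow> nat pmf" where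
  "coal_count k t = embed_pmf (\<lambda>m. hold_le k t m - hold_le k t (Suc m))"

text \<open>A coalescence event: (population, merged lineage, merged lineage); lineages are
  represented by their sets of descendant leaves.  Population None = above the root.\<close>
type_synonym 'l event = "'l option \<times> 'l set \<times> 'l set"

fun merge_steps :: "'l option \<Rightarrow> nat \<Rightarrow> 'l set set \<Rightarrow> ('l event list \<times> 'l set set) pmf" where
  "merge_steps p 0 L = return_pmf ([], L)"
| "merge_steps p (Suc m) L =
     (if card L < 2 then return_pmf ([], L) else
      bind_pmf (pmf_of_set {(A, B). A \<in> L \<and> B \<in> L \<and> A \<noteq> B}) (\<lambda>(A, B).
        map_pmf (\<lambda>(es, L'). ((p, A, B) # es, L'))
          (merge_steps p m (insert (A \<union> B) (L - {A, B})))))"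

definition branch :: "'l \<Rightarrow> real \<Rightarrow> 'l set set \<Rightarrow> ('l event list \<times> 'l set set) pmf" where
  "branch p t L = bind_pmf (coal_count (card L) t) (\<lambda>m. merge_steps (Some p) m L)"

text \<open>sim T: events inside the subtree T, lineages exiting each population of T
  (at its upper end), and the lineages present at the root node of T.\<close>
primrec sim :: "'l stree \<Rightarrow> ('l event list \<times> ('l \<Rightarrow> 'l set set) \<times> 'l set set) pmf" where
  "sim (Lf x) = return_pmf ([], (\<lambda>_. {}), {{x}})"
| "sim (Nd v l sl r sr) =
     bind_pmf (sim l) (\<lambda>(e1, x1, L1).
     bind_pmf (sim r) (\<lambda>(e2, x2, L2).
     bind_pmf (branch (label l) sl L1) (\<lambda>(f1, L1').
     bind_pmf (branch (label r) sr L2) (\<lambda>(f2, L2').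
       return_pmf (e1 @ e2 @ f1 @ f2,
                   (\<lambda>w. x1 w \<union> x2 w)(label l := L1', label r := L2'),
                   L1' \<union> L2')))))"

definition msc :: "'l stree \<Rightarrow> ('l event list \<times> ('l \<Rightarrow> 'l set set)) pmf" where
  "msc T = bind_pmf (sim T) (\<lambda>(e, x, L).
     map_pmf (\<lambda>(f, L'). (e @ f, x)) (merge_steps None (card L - 1) L))"

definition gt_clusters :: "'l set \<Rightarrow> 'l event list \<Rightarrow> 'l set set" where
  "gt_clusters Lv evs = (\<lambda>x. {x}) ` Lv \<union> (\<lambda>(p, c1, c2). c1 \<union> c2) ` set evs"

text \<open>Number of edges on the a--b path of the unrooted gene tree topology: the edges on
  the rooted path are the edges above clusters separating a and b; when the lowest
  common ancestor is the root, the two root edges are merged into one by unrooting.\<close>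
definition gt_dist :: "'l set \<Rightarrow> 'l event list \<Rightarrow> 'l \<Rightarrow> 'l \<Rightarrow> nat" where
  "gt_dist Lv evs a b =
     card {C \<in> gt_clusters Lv evs. a \<in> C \<and> b \<notin> C}
   + card {C \<in> gt_clusters Lv evs. b \<in> C \<and> a \<notin> C}
   - (if \<forall>C \<in> gt_clusters Lv evs. a \<in> C \<and> b \<in> C \<longrightarrow> C = Lv then 1 else 0)"

datatype cnode = A | B | X nat | Y nat | W nat | Z nat

text \<open>wt f g j is the subtree rooted at w_(j+1) (a non-root backbone node).\<close>
primrec wt :: "real \<Rightarrow> real \<Rightarrow> nat \<Rightarrow> cnode stree" where
  "wt f g 0 = Nd (W 1) (Lf A) g (Lf (X 1)) g"
| "wt f g (Suc j) =
     Nd (W (j + 2)) (Nd (Z (j + 1)) (wt f g j) f (Lf (Y (j + 1))) g) g (Lf (X (j + 2))) g"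

definition cat_g :: "nat \<Rightarrow> real" where
  "cat_g n = 4 * ln (real n)"

definition caterpillar :: "nat \<Rightarrow> real \<Rightarrow> cnode stree" where
  "caterpillar n f =
     (let h = n div 2; g = cat_g n in
      Nd (W h) (Nd (Z (h - 1)) (wt f g (h - 2)) f (Lf (Y (h - 1))) g) g (Lf B) g)"

text \<open>X_i: coalescences in populations (w_i,z_i) [named W i] or (z_i,w_(i+1)) [named Z i]
  in which one merging lineage is ancestral to a.\<close>
definition Xcnt :: "nat \<Rightarrow> cnode event list \<times> (cnode \<Rightarrow> cnode set set) \<Rightarrow> nat" where
  "Xcnt i \<omega> = length (filter (\<lambda>(p, c1, c2). (p = Some (W i) \<or> p = Some (Z i)) \<and> (A \<in> c1 \<or> A \<in> c2))
                         (fst \<omega>))"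

definition Fev :: "nat \<Rightarrow> (cnode event list \<times> (cnode \<Rightarrow> cnode set set)) set" where
  "Fev i = {\<omega>. card (snd \<omega> (Z i)) = 1}"

definition Fall :: "nat \<Rightarrow> (cnode event list \<times> (cnode \<Rightarrow> cnode set set)) set" where
  "Fall n = (\<Inter>i\<in>{1..(n - 2) div 2}. Fev i)"

definition dab :: "nat \<Rightarrow> real \<Rightarrow> cnode event list \<times> (cnode \<Rightarrow> cnode set set) \<Rightarrow> nat" where
  "dab n f \<omega> = gt_dist (leaves (caterpillar n f)) (fst \<omega>) A B"

end

theory Submission
  imports Defs
begin

text \<open>Let F be the event that in every block all lineages entering (z_i, w_(i+1)) coalesce. On F the
  subtree below w_(i+1) always emits the same two lineages (the one carrying a, and x_(i+1)), so
  the blocks behave like independent repetitions of one experiment with outcome (F_i, X_i), and the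
  gene tree distance is 1 + X_1 + ... + X_k with k = (n-2)/2. For the restricted moments
  a_r = E[1_F T^r] of T = X_1 + ... + X_k this gives a_0 = P(F_1)^k and
  a_2 a_0 - a_1^2 = k a_0^2 Var(X_1 | F_1), hence
  Var d >= E[1_F (d - E d)^2] >= (a_2 a_0 - a_1^2) / a_0 = k Var(X_1 | F_1) P(F).\<close>

lemma expectation_bind_pmf_finite:
  fixes h :: "'b \<Rightarrow> real"
  assumes "finite (set_pmf p)" "\<And>s. s \<in> set_pmf p \<Longrightarrow> finite (set_pmf (K s))"
  shows "measure_pmf.expectation (p \<bind> K) h
       = measure_pmf.expectation p (\<lambda>s. measure_pmf.expectation (K s) h)"
proof -
  have "measure_pmf.expectation (p \<bind> K) h
      = (\<Sum>s\<in>set_pmf p. pmf p s *\<^sub>R measure_pmf.expectation (K s) h)"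
    by (rule pmf_expectation_bind[OF assms order.refl])
  also have "\<dots> = measure_pmf.expectation p (\<lambda>s. measure_pmf.expectation (K s) h)"
    by (rule integral_measure_pmf[OF assms(1), symmetric]) auto
  finally show ?thesis .
qed

text \<open>A walk with steps drawn from \<beta>: the state (g, t) records whether every step so far had first
  component True and the running sum of the second components; the first False kills the walk,
  which then stays at (False, 0).\<close>
definition killed_step :: "(bool \<times> nat) pmf \<Rightarrow> bool \<times> nat \<Rightarrow> (bool \<times> nat) pmf" where
  "killed_step \<beta> s = (case s of (g, t) \<Rightarrow>
     if g then map_pmf (\<lambda>(b, x). (b, if b then t + x else 0)) \<beta> else return_pmf (False, 0))"

primrec killed_walk :: "(bool \<times> nat) pmf \<Rightarrow> nat \<Rightarrow> (bool \<times> nat) pmf" where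
  "killed_walk \<beta> 0 = return_pmf (True, 0)"
| "killed_walk \<beta> (Suc k) = killed_walk \<beta> k \<bind> killed_step \<beta>"

definition alive_moment :: "(bool \<times> nat) pmf \<Rightarrow> nat \<Rightarrow> real" where
  "alive_moment p r = measure_pmf.expectation p (\<lambda>(g, t). if g then real t ^ r else 0)"

lemma finite_set_pmf_killed_walk:
  assumes "finite (set_pmf \<beta>)"
  shows "finite (set_pmf (killed_walk \<beta> k))"
proof (induction k)
  case (Suc k)
  have "finite (set_pmf (killed_step \<beta> s))" for s
    using assms by (auto simp: killed_step_def split: prod.splits)
  with Suc show ?case by simp
qed simp

lemma alive_moment_nonneg: "alive_moment p 0 \<ge> 0"
  unfolding alive_moment_def by (rule integral_nonneg_AE) auto

lemma prob_alive_eq_alive_moment: "measure_pmf.prob p {s. fst s} = alive_moment p 0"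
proof -
  have "measure_pmf.prob p {s. fst s} = measure_pmf.expectation p (indicator {s. fst s})"
    by simp
  also have "\<dots> = alive_moment p 0"
    unfolding alive_moment_def by (rule Bochner_Integration.integral_cong) (auto simp: indicator_def)
  finally show ?thesis .
qed

lemma expectation_alive_quadratic:
  assumes "finite (set_pmf p)"
  shows "measure_pmf.expectation p (\<lambda>(g, t). if g then c0 + c1 * real t + c2 * (real t)\<^sup>2 else 0)
       = c0 * alive_moment p 0 + c1 * alive_moment p 1 + c2 * alive_moment p 2"
proof -
  have linear: "measure_pmf.expectation p (\<lambda>s. c0 * m0 s + c1 * m1 s + c2 * m2 s)
      = c0 * measure_pmf.expectation p m0 + c1 * measure_pmf.expectation p m1
        + c2 * measure_pmf.expectation p m2" for m0 m1 m2 :: "bool \<times> nat \<Rightarrow> real"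
    using assms by (simp add: integrable_measure_pmf_finite)
  show ?thesis
    unfolding alive_moment_def linear[symmetric]
    by (rule Bochner_Integration.integral_cong) auto
qed

lemma expectation_killed_walk_Suc:
  fixes \<phi> :: "nat \<Rightarrow> real"
  assumes "finite (set_pmf \<beta>)"
  shows "measure_pmf.expectation (killed_walk \<beta> (Suc k)) (\<lambda>(g, t). if g then \<phi> t else 0)
       = measure_pmf.expectation (killed_walk \<beta> k)
           (\<lambda>(g, t). if g then measure_pmf.expectation \<beta> (\<lambda>(b, x). if b then \<phi> (t + x) else 0) else 0)"
proof -
  have fin_step: "finite (set_pmf (killed_step \<beta> s))" for s
    using assms by (auto simp: killed_step_def split: prod.splits)
  have "measure_pmf.expectation (killed_walk \<beta> (Suc k)) (\<lambda>(g, t). if g then \<phi> t else 0)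
      = measure_pmf.expectation (killed_walk \<beta> k)
          (\<lambda>s. measure_pmf.expectation (killed_step \<beta> s) (\<lambda>(g, t). if g then \<phi> t else 0))"
    unfolding killed_walk.simps
    by (rule expectation_bind_pmf_finite[OF finite_set_pmf_killed_walk[OF assms] fin_step])
  also have "\<dots> = measure_pmf.expectation (killed_walk \<beta> k)
      (\<lambda>(g, t). if g then measure_pmf.expectation \<beta> (\<lambda>(b, x). if b then \<phi> (t + x) else 0) else 0)"
    by (rule Bochner_Integration.integral_cong)
       (auto simp: killed_step_def split_beta intro!: Bochner_Integration.integral_cong)
  finally show ?thesis .
qed

lemma alive_moments_killed_walk_Suc:
  fixes k :: nat
  assumes fin: "finite (set_pmf \<beta>)"
  defines "a \<equiv> alive_moment (killed_walk \<beta> k)" and "\<nu> \<equiv> alive_moment \<beta>"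
  shows "alive_moment (killed_walk \<beta> (Suc k)) 0 = \<nu> 0 * a 0"
    and "alive_moment (killed_walk \<beta> (Suc k)) 1 = \<nu> 1 * a 0 + \<nu> 0 * a 1"
    and "alive_moment (killed_walk \<beta> (Suc k)) 2 = \<nu> 2 * a 0 + 2 * \<nu> 1 * a 1 + \<nu> 0 * a 2"
proof -
  have inner: "measure_pmf.expectation \<beta> (\<lambda>(b, x). if b then real (t + x) ^ r else 0)
      = c0 * \<nu> 0 + c1 * \<nu> 1 + c2 * \<nu> 2"
    if "\<And>x. real (t + x) ^ r = c0 + c1 * real x + c2 * (real x)\<^sup>2" for t r c0 c1 c2
  proof -
    have "measure_pmf.expectation \<beta> (\<lambda>(b, x). if b then real (t + x) ^ r else 0)
        = measure_pmf.expectation \<beta> (\<lambda>(b, x). if b then c0 + c1 * real x + c2 * (real x)\<^sup>2 else 0)"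
      using that by (intro Bochner_Integration.integral_cong) auto
    then show ?thesis
      unfolding \<nu>_def expectation_alive_quadratic[OF fin] .
  qed
  have outer: "alive_moment (killed_walk \<beta> (Suc k)) r = d0 * a 0 + d1 * a 1 + d2 * a 2"
    if "\<And>t. measure_pmf.expectation \<beta> (\<lambda>(b, x). if b then real (t + x) ^ r else 0)
             = d0 + d1 * real t + d2 * (real t)\<^sup>2" for r d0 d1 d2
  proof -
    have "alive_moment (killed_walk \<beta> (Suc k)) r = measure_pmf.expectation (killed_walk \<beta> k)
        (\<lambda>(g, t). if g then measure_pmf.expectation \<beta> (\<lambda>(b, x). if b then real (t + x) ^ r else 0) else 0)"
      unfolding alive_moment_def by (rule expectation_killed_walk_Suc[OF fin])
    also have "\<dots> = measure_pmf.expectation (killed_walk \<beta> k)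
        (\<lambda>(g, t). if g then d0 + d1 * real t + d2 * (real t)\<^sup>2 else 0)"
      using that by (intro Bochner_Integration.integral_cong) auto
    finally show ?thesis
      unfolding a_def expectation_alive_quadratic[OF finite_set_pmf_killed_walk[OF fin]] .
  qed
  show "alive_moment (killed_walk \<beta> (Suc k)) 0 = \<nu> 0 * a 0"
    using outer[of 0 "\<nu> 0" 0 0] inner[of _ 0 1 0 0] by simp
  show "alive_moment (killed_walk \<beta> (Suc k)) 1 = \<nu> 1 * a 0 + \<nu> 0 * a 1"
    using outer[of 1 "\<nu> 1" "\<nu> 0" 0] inner[of _ 1 "real _" 1 0] by (simp add: algebra_simps)
  show "alive_moment (killed_walk \<beta> (Suc k)) 2 = \<nu> 2 * a 0 + 2 * \<nu> 1 * a 1 + \<nu> 0 * a 2"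
    using outer[of 2 "\<nu> 2" "2 * \<nu> 1" "\<nu> 0"] inner[of _ 2 "(real _)\<^sup>2" "2 * real _" 1]
    by (simp add: algebra_simps power2_eq_square)
qed

lemma alive_moment_killed_walk_0:
  assumes "finite (set_pmf \<beta>)"
  shows "alive_moment (killed_walk \<beta> k) 0 = alive_moment \<beta> 0 ^ k"
proof (induction k)
  case 0
  then show ?case by (simp add: alive_moment_def)
next
  case (Suc k)
  then show ?case using alive_moments_killed_walk_Suc(1)[OF assms] by simp
qed

text \<open>The walk analogue of the additivity of variance over independent summands.\<close>
lemma alive_moments_killed_walk_gap:
  assumes fin: "finite (set_pmf \<beta>)"
  defines "a \<equiv> \<lambda>k. alive_moment (killed_walk \<beta> k)" and "\<nu> \<equiv> alive_moment \<beta>"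
  shows "(a k 2 * a k 0 - (a k 1)\<^sup>2) * (\<nu> 0)\<^sup>2 = real k * (a k 0)\<^sup>2 * (\<nu> 0 * \<nu> 2 - (\<nu> 1)\<^sup>2)"
proof (induction k)
  case 0
  then show ?case by (simp add: a_def alive_moment_def)
next
  case (Suc k)
  have gap: "a (Suc k) 2 * a (Suc k) 0 - (a (Suc k) 1)\<^sup>2
      = (\<nu> 0)\<^sup>2 * (a k 2 * a k 0 - (a k 1)\<^sup>2) + (a k 0)\<^sup>2 * (\<nu> 0 * \<nu> 2 - (\<nu> 1)\<^sup>2)"
    unfolding a_def \<nu>_def alive_moments_killed_walk_Suc[OF fin]
    by (simp add: algebra_simps power2_eq_square)
  have a0: "a (Suc k) 0 = \<nu> 0 * a k 0"
    unfolding a_def \<nu>_def by (rule alive_moments_killed_walk_Suc(1)[OF fin])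
  have "(a (Suc k) 2 * a (Suc k) 0 - (a (Suc k) 1)\<^sup>2) * (\<nu> 0)\<^sup>2
      = (\<nu> 0)\<^sup>2 * ((a k 2 * a k 0 - (a k 1)\<^sup>2) * (\<nu> 0)\<^sup>2) + (\<nu> 0)\<^sup>2 * (a k 0)\<^sup>2 * (\<nu> 0 * \<nu> 2 - (\<nu> 1)\<^sup>2)"
    unfolding gap by (simp add: algebra_simps)
  also have "\<dots> = real (Suc k) * (a (Suc k) 0)\<^sup>2 * (\<nu> 0 * \<nu> 2 - (\<nu> 1)\<^sup>2)"
    unfolding Suc.IH a0 by (simp add: algebra_simps power2_eq_square)
  finally show ?case .
qed

lemma expectation_killed_walk_square_ge:
  assumes fin: "finite (set_pmf \<beta>)"
  defines "\<nu> \<equiv> alive_moment \<beta>"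
  shows "measure_pmf.expectation (killed_walk \<beta> k) (\<lambda>(g, t). if g then (u + real t)\<^sup>2 else 0)
       \<ge> real k * \<nu> 0 ^ k * (\<nu> 2 / \<nu> 0 - (\<nu> 1 / \<nu> 0)\<^sup>2)"
proof -
  define a where "a = alive_moment (killed_walk \<beta> k)"
  have E: "measure_pmf.expectation (killed_walk \<beta> k) (\<lambda>(g, t). if g then (u + real t)\<^sup>2 else 0)
      = u\<^sup>2 * a 0 + 2 * u * a 1 + a 2"
  proof -
    have "measure_pmf.expectation (killed_walk \<beta> k) (\<lambda>(g, t). if g then (u + real t)\<^sup>2 else 0)
        = measure_pmf.expectation (killed_walk \<beta> k)
            (\<lambda>(g, t). if g then u\<^sup>2 + 2 * u * real t + 1 * (real t)\<^sup>2 else 0)"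
      by (intro Bochner_Integration.integral_cong) (auto simp: power2_eq_square algebra_simps)
    then show ?thesis
      unfolding a_def expectation_alive_quadratic[OF finite_set_pmf_killed_walk[OF fin]] by simp
  qed
  show ?thesis
  proof (cases "\<nu> 0 = 0")
    case True
    then show ?thesis
      by (simp add: integral_nonneg_AE split_beta)
  next
    case False
    then have \<nu>0: "\<nu> 0 > 0"
      using alive_moment_nonneg[of \<beta>] by (simp add: \<nu>_def)
    have a0: "a 0 = \<nu> 0 ^ k" and a0_pos: "a 0 > 0"
      using alive_moment_killed_walk_0[OF fin] \<nu>0 by (simp_all add: a_def \<nu>_def)
    have "(a 2 * a 0 - (a 1)\<^sup>2) / a 0 = real k * a 0 * (\<nu> 2 / \<nu> 0 - (\<nu> 1 / \<nu> 0)\<^sup>2)"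
      using alive_moments_killed_walk_gap[OF fin, of k] \<nu>0 a0_pos
      by (simp add: a_def \<nu>_def field_simps power2_eq_square)
    moreover have "u\<^sup>2 * a 0 + 2 * u * a 1 + a 2 - (a 2 * a 0 - (a 1)\<^sup>2) / a 0 = (u * a 0 + a 1)\<^sup>2 / a 0"
      using a0_pos by (simp add: field_simps power2_eq_square)
    ultimately show ?thesis
      unfolding E a0[symmetric] using a0_pos
      by (smt (verit, best) divide_nonneg_pos zero_le_power2)
  qed
qed

lemma expectation_cond_pmf:
  fixes h :: "'a \<Rightarrow> real"
  assumes fin: "finite (set_pmf p)" and ne: "set_pmf p \<inter> S \<noteq> {}"
  shows "measure_pmf.expectation (cond_pmf p S) h
       = measure_pmf.expectation p (\<lambda>x. if x \<in> S then h x else 0) / measure_pmf.prob p S"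
proof -
  have "measure_pmf.expectation (cond_pmf p S) h = (\<Sum>x\<in>set_pmf p. h x * pmf (cond_pmf p S) x)"
    by (rule integral_measure_pmf_real[OF fin]) (use ne in auto)
  also have "\<dots> = (\<Sum>x\<in>set_pmf p. (if x \<in> S then h x else 0) * pmf p x) / measure_pmf.prob p S"
    by (simp add: pmf_cond[OF ne] sum_divide_distrib) (rule sum.cong, auto)
  also have "(\<Sum>x\<in>set_pmf p. (if x \<in> S then h x else 0) * pmf p x)
      = measure_pmf.expectation p (\<lambda>x. if x \<in> S then h x else 0)"
    by (rule integral_measure_pmf_real[OF fin, symmetric]) auto
  finally show ?thesis .
qed

lemma variance_cond_alive:
  assumes fin: "finite (set_pmf \<beta>)" and pos: "alive_moment \<beta> 0 > 0"
  defines "\<nu> \<equiv> alive_moment \<beta>"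
  shows "measure_pmf.variance (cond_pmf \<beta> {s. fst s}) (\<lambda>s. real (snd s)) = \<nu> 2 / \<nu> 0 - (\<nu> 1 / \<nu> 0)\<^sup>2"
proof -
  have ne: "set_pmf \<beta> \<inter> {s. fst s} \<noteq> {}"
    using pos prob_alive_eq_alive_moment[of \<beta>] measure_pmf_zero_iff[of \<beta> "{s. fst s}"] by auto
  have E: "measure_pmf.expectation (cond_pmf \<beta> {s. fst s}) h
      = measure_pmf.expectation \<beta> (\<lambda>s. if fst s then h s else 0) / \<nu> 0" for h :: "bool \<times> nat \<Rightarrow> real"
    using expectation_cond_pmf[OF fin ne, of h] prob_alive_eq_alive_moment[of \<beta>] by (simp add: \<nu>_def)
  define m where "m = \<nu> 1 / \<nu> 0"
  have mean: "measure_pmf.expectation (cond_pmf \<beta> {s. fst s}) (\<lambda>s. real (snd s)) = m"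
    unfolding E m_def \<nu>_def alive_moment_def
    by (rule arg_cong[where f = "\<lambda>z. z / _"], rule Bochner_Integration.integral_cong) auto
  have "measure_pmf.variance (cond_pmf \<beta> {s. fst s}) (\<lambda>s. real (snd s))
      = measure_pmf.expectation \<beta> (\<lambda>(b, x). if b then m\<^sup>2 + (- 2 * m) * real x + 1 * (real x)\<^sup>2 else 0) / \<nu> 0"
    unfolding mean E
    by (rule arg_cong[where f = "\<lambda>z. z / _"], rule Bochner_Integration.integral_cong)
       (auto simp: power2_eq_square algebra_simps)
  also have "\<dots> = \<nu> 2 / \<nu> 0 - (\<nu> 1 / \<nu> 0)\<^sup>2"
    unfolding expectation_alive_quadratic[OF fin] using pos
    by (simp add: \<nu>_def m_def field_simps power2_eq_square)
  finally show ?thesis .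
qed

lemma expectation_restricted_le_variance:
  fixes \<mu> :: "'a pmf" and h :: "'a \<Rightarrow> real"
  assumes bounded: "\<And>\<omega>. \<omega> \<in> set_pmf \<mu> \<Longrightarrow> \<bar>h \<omega>\<bar> \<le> K"
  shows "measure_pmf.expectation \<mu> (\<lambda>\<omega>. if \<omega> \<in> F then (h \<omega> - measure_pmf.expectation \<mu> h)\<^sup>2 else 0)
       \<le> measure_pmf.variance \<mu> h"
proof (rule integral_mono')
  define m where "m = measure_pmf.expectation \<mu> h"
  show "integrable (measure_pmf \<mu>) (\<lambda>\<omega>. (h \<omega> - measure_pmf.expectation \<mu> h)\<^sup>2)"
    unfolding m_def[symmetric]
  proof (rule measure_pmf.integrable_const_bound[where B = "(K + \<bar>m\<bar>)\<^sup>2"])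
    have "\<bar>h \<omega> - m\<bar>\<^sup>2 \<le> (K + \<bar>m\<bar>)\<^sup>2" if "\<omega> \<in> set_pmf \<mu>" for \<omega>
      using bounded[OF that] by (intro power_mono) auto
    then show "AE \<omega> in measure_pmf \<mu>. norm ((h \<omega> - m)\<^sup>2) \<le> (K + \<bar>m\<bar>)\<^sup>2"
      by (simp add: AE_measure_pmf_iff)
  qed simp
qed auto

lemma variance_cond_pmf_eq_alive_moments:
  fixes \<mu> :: "'a pmf" and X :: "'a \<Rightarrow> nat"
  assumes fin: "finite (set_pmf \<beta>)" and law: "map_pmf (\<lambda>\<omega>. (\<omega> \<in> E, X \<omega>)) \<mu> = \<beta>"
    and pos: "alive_moment \<beta> 0 > 0"
  defines "\<nu> \<equiv> alive_moment \<beta>"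
  shows "measure_pmf.variance (cond_pmf \<mu> E) (\<lambda>\<omega>. real (X \<omega>)) = \<nu> 2 / \<nu> 0 - (\<nu> 1 / \<nu> 0)\<^sup>2"
proof -
  let ?\<psi> = "\<lambda>\<omega>. (\<omega> \<in> E, X \<omega>)"
  have "measure_pmf.prob \<mu> (?\<psi> -` {s. fst s}) = measure_pmf.prob \<beta> {s. fst s}"
    unfolding law[symmetric] by simp
  then have "measure_pmf.prob \<mu> (?\<psi> -` {s. fst s}) > 0"
    using pos prob_alive_eq_alive_moment[of \<beta>] by simp
  then have ne: "set_pmf \<mu> \<inter> ?\<psi> -` {s. fst s} \<noteq> {}"
    by (auto simp: measure_pmf_zero_iff[symmetric])
  have "measure_pmf.variance (cond_pmf \<mu> E) (\<lambda>\<omega>. real (X \<omega>))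
      = measure_pmf.variance (map_pmf ?\<psi> (cond_pmf \<mu> (?\<psi> -` {s. fst s}))) (\<lambda>s. real (snd s))"
    by (simp add: vimage_def)
  also have "\<dots> = measure_pmf.variance (cond_pmf \<beta> {s. fst s}) (\<lambda>s. real (snd s))"
    unfolding cond_map_pmf[OF ne, symmetric] law ..
  finally show ?thesis
    using variance_cond_alive[OF fin pos] by (simp add: \<nu>_def)
qed

text \<open>Applied with \<mu> the gene tree law, F the event that every block coalesces, h the a--b distance
  and \<beta> the common law of the pairs (F_i, X_i).\<close>
lemma variance_ge_killed_walk:
  fixes \<mu> :: "'a pmf" and h :: "'a \<Rightarrow> real" and X :: "'a \<Rightarrow> nat"
  assumes fin: "finite (set_pmf \<beta>)"
    and walk: "map_pmf (\<lambda>\<omega>. (\<omega> \<in> F, if \<omega> \<in> F then h \<omega> else 0)) \<mu>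
             = map_pmf (\<lambda>(g, t). (g, if g then c + real t else 0)) (killed_walk \<beta> k)"
    and first: "map_pmf (\<lambda>\<omega>. (\<omega> \<in> E, X \<omega>)) \<mu> = \<beta>"
    and bounded: "\<And>\<omega>. \<omega> \<in> set_pmf \<mu> \<Longrightarrow> \<bar>h \<omega>\<bar> \<le> K"
  shows "measure_pmf.variance \<mu> h
       \<ge> real k * measure_pmf.variance (cond_pmf \<mu> E) (\<lambda>\<omega>. real (X \<omega>)) * measure_pmf.prob \<mu> F"
proof -
  define \<nu> where "\<nu> = alive_moment \<beta>"
  define m where "m = measure_pmf.expectation \<mu> h"
  let ?\<phi> = "\<lambda>\<omega>. (\<omega> \<in> F, if \<omega> \<in> F then h \<omega> else 0)"
  have prob_F: "measure_pmf.prob \<mu> F = \<nu> 0 ^ k"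
  proof -
    have "measure_pmf.prob \<mu> F = measure_pmf.prob (map_pmf ?\<phi> \<mu>) {s. fst s}"
      by (simp add: vimage_def)
    also have "\<dots> = measure_pmf.prob (killed_walk \<beta> k) {s. fst s}"
      unfolding walk by (simp add: vimage_def split_beta)
    finally show ?thesis
      by (simp add: prob_alive_eq_alive_moment alive_moment_killed_walk_0[OF fin] \<nu>_def)
  qed
  have "real k * \<nu> 0 ^ k * (\<nu> 2 / \<nu> 0 - (\<nu> 1 / \<nu> 0)\<^sup>2)
      \<le> measure_pmf.expectation (killed_walk \<beta> k) (\<lambda>(g, t). if g then (c - m + real t)\<^sup>2 else 0)"
    unfolding \<nu>_def by (rule expectation_killed_walk_square_ge[OF fin])
  also have "\<dots> = measure_pmf.expectation (map_pmf ?\<phi> \<mu>) (\<lambda>(g, s). if g then (s - m)\<^sup>2 else 0)"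
    unfolding walk by (simp, intro Bochner_Integration.integral_cong) (auto simp: algebra_simps)
  also have "\<dots> = measure_pmf.expectation \<mu> (\<lambda>\<omega>. if \<omega> \<in> F then (h \<omega> - m)\<^sup>2 else 0)"
    by (simp, intro Bochner_Integration.integral_cong) auto
  also have "\<dots> \<le> measure_pmf.variance \<mu> h"
    unfolding m_def by (rule expectation_restricted_le_variance[OF bounded])
  finally have var_ge: "real k * \<nu> 0 ^ k * (\<nu> 2 / \<nu> 0 - (\<nu> 1 / \<nu> 0)\<^sup>2) \<le> measure_pmf.variance \<mu> h" .
  show ?thesis
  proof (cases "\<nu> 0 = 0")
    case True
    then have "real k * measure_pmf.variance (cond_pmf \<mu> E) (\<lambda>\<omega>. real (X \<omega>)) * measure_pmf.prob \<mu> F = 0"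
      unfolding prob_F by (cases k) auto
    then show ?thesis
      using measure_pmf.variance_positive[of \<mu> h] by (simp only:)
  next
    case False
    then have "\<nu> 0 > 0"
      using alive_moment_nonneg[of \<beta>] by (simp add: \<nu>_def)
    then show ?thesis
      using var_ge variance_cond_pmf_eq_alive_moments[OF fin first] unfolding prob_F
      by (simp add: \<nu>_def mult_ac)
  qed
qed

lemma merge_steps_trivial: "card L < 2 \<Longrightarrow> merge_steps p m L = return_pmf ([], L)"
  by (cases m) auto

lemma merge_steps_Suc_nontrivial:
  "\<not> card L < 2 \<Longrightarrow> merge_steps p (Suc m) L =
     bind_pmf (pmf_of_set {(A, B). A \<in> L \<and> B \<in> L \<and> A \<noteq> B}) (\<lambda>(A, B).
       map_pmf (\<lambda>(es, L'). ((p, A, B) # es, L')) (merge_steps p m (insert (A \<union> B) (L - {A, B}))))"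
  by (simp only: merge_steps.simps(2) if_not_P if_False)

lemma merge_steps_pair:
  assumes "P \<noteq> Q"
  shows "merge_steps p (Suc m) {P, Q}
       = map_pmf (\<lambda>(a, b). ([(p, a, b)], {P \<union> Q})) (pmf_of_set {(P, Q), (Q, P)})"
proof -
  have pairs: "{(a, b). (a = P \<or> a = Q) \<and> (b = P \<or> b = Q) \<and> a \<noteq> b} = {(P, Q), (Q, P)}"
    using assms by auto
  have "merge_steps p (Suc m) {P, Q} = bind_pmf (pmf_of_set {(P, Q), (Q, P)}) (\<lambda>(a, b).
      map_pmf (\<lambda>(es, L'). ((p, a, b) # es, L')) (merge_steps p m (insert (a \<union> b) ({P, Q} - {a, b}))))"
    using assms by (simp add: pairs)
  also have "\<dots> = bind_pmf (pmf_of_set {(P, Q), (Q, P)})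
      (\<lambda>ab. return_pmf ((\<lambda>(a, b). ([(p, a, b)], {P \<union> Q})) ab))"
    by (rule bind_pmf_cong[OF refl]) (auto simp: merge_steps_trivial Un_commute insert_Diff_if)
  finally show ?thesis by (simp add: map_pmf_def)
qed

lemma map_merge_steps_pair_const:
  assumes "P \<noteq> Q" "\<And>a b. (a, b) \<in> {(P, Q), (Q, P)} \<Longrightarrow> h ([(p, a, b)], {P \<union> Q}) = c"
  shows "map_pmf h (merge_steps p (Suc m) {P, Q}) = return_pmf c"
proof -
  have "map_pmf h (merge_steps p (Suc m) {P, Q}) = map_pmf (\<lambda>_. c) (pmf_of_set {(P, Q), (Q, P)})"
    unfolding merge_steps_pair[OF assms(1)] map_pmf_comp
    by (rule map_pmf_cong[OF refl]) (use assms(2) in auto)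
  then show ?thesis by simp
qed

definition pairs3_set :: "(nat \<times> nat) set" where
  "pairs3_set = {(0, 1), (0, 2), (1, 0), (1, 2), (2, 0), (2, 1)}"

definition pairs3 :: "(nat \<times> nat) pmf" where
  "pairs3 = pmf_of_set pairs3_set"

lemma pairs3_set_ne: "pairs3_set \<noteq> {}" and finite_pairs3_set: "finite pairs3_set"
  by (auto simp: pairs3_set_def)

lemma set_pmf_pairs3 [simp]: "set_pmf pairs3 = pairs3_set"
  by (simp add: pairs3_def pairs3_set_ne finite_pairs3_set)

lemma pairs3_cases:
  "(i, j) \<in> pairs3_set \<Longrightarrow> (i = 0 \<and> j = 1) \<or> (i = 0 \<and> j = 2) \<or> (i = 1 \<and> j = 0)
     \<or> (i = 1 \<and> j = 2) \<or> (i = 2 \<and> j = 0) \<or> (i = 2 \<and> j = 1)"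
  by (auto simp: pairs3_set_def)

text \<open>In the blocks, index 0 is the lineage containing a.\<close>
definition lineage3 :: "'a set \<Rightarrow> 'a \<Rightarrow> 'a \<Rightarrow> nat \<Rightarrow> 'a set" where
  "lineage3 C x y i = (if i = 0 then C else if i = 1 then {x} else {y})"

definition merge_pair_then ::
  "'l option \<Rightarrow> 'l set \<Rightarrow> 'l \<Rightarrow> 'l \<Rightarrow> nat \<Rightarrow> nat \<Rightarrow> nat \<Rightarrow> ('l event list \<times> 'l set set) pmf" where
  "merge_pair_then q C x y i j m =
     map_pmf (\<lambda>(es, L'). ((q, lineage3 C x y i, lineage3 C x y j) # es, L'))
       (merge_steps q m (insert (lineage3 C x y i \<union> lineage3 C x y j)
          ({C, {x}, {y}} - {lineage3 C x y i, lineage3 C x y j})))"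

lemma merge_steps_triple:
  assumes "C \<noteq> {x}" "C \<noteq> {y}" "x \<noteq> y"
  shows "merge_steps q (Suc m) {C, {x}, {y}} = bind_pmf pairs3 (\<lambda>(i, j). merge_pair_then q C x y i j m)"
proof -
  let ?s = "lineage3 C x y"
  have c3: "\<not> card {C, {x}, {y}} < 2" using assms by auto
  have pe: "{(a, b). a \<in> {C, {x}, {y}} \<and> b \<in> {C, {x}, {y}} \<and> a \<noteq> b}
      = (\<lambda>(i, j). (?s i, ?s j)) ` pairs3_set"
    using assms by (auto simp: pairs3_set_def lineage3_def)
  have inj: "inj_on (\<lambda>(i, j). (?s i, ?s j)) pairs3_set"
    using assms by (auto simp: pairs3_set_def lineage3_def inj_on_def)
  have "pmf_of_set {(a, b). a \<in> {C, {x}, {y}} \<and> b \<in> {C, {x}, {y}} \<and> a \<noteq> b}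
      = map_pmf (\<lambda>(i, j). (?s i, ?s j)) pairs3"
    unfolding pe pairs3_def
    by (rule map_pmf_of_set_inj[symmetric, OF inj pairs3_set_ne finite_pairs3_set])
  then show ?thesis
    unfolding merge_pair_then_def
    by (simp only: merge_steps_Suc_nontrivial[OF c3] bind_map_pmf) (rule bind_pmf_cong, auto)
qed

lemma merge_steps_populations:
  "(es, L') \<in> set_pmf (merge_steps p m L) \<Longrightarrow> \<forall>v\<in>set es. fst v = p"
proof (induction m arbitrary: L es L')
  case (Suc m)
  then show ?case
    by (cases "card L < 2") (fastforce simp: merge_steps_Suc_nontrivial)+
qed simp

lemma merge_steps_length:
  "finite L \<Longrightarrow> (es, L') \<in> set_pmf (merge_steps p m L) \<Longrightarrow> finite L' \<and> length es + card L' \<le> card L"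
proof (induction m arbitrary: L es L')
  case (Suc m)
  show ?case
  proof (cases "card L < 2")
    case True
    then show ?thesis using Suc.prems by simp
  next
    case False
    have finL: "finite L" using Suc.prems(1) .
    have "\<exists>a\<in>L. \<exists>b\<in>L. a \<noteq> b" using False card_le_Suc0_iff_eq[OF finL] by auto
    then have pe: "set_pmf (pmf_of_set {(A, B). A \<in> L \<and> B \<in> L \<and> A \<noteq> B})
        = {(A, B). A \<in> L \<and> B \<in> L \<and> A \<noteq> B}"
      by (intro set_pmf_of_set) (auto intro: finite_subset[of _ "L \<times> L"] simp: finL)
    obtain a b es' where ab: "a \<in> L" "b \<in> L" "a \<noteq> b" and es: "es = (p, a, b) # es'"
      and in2: "(es', L') \<in> set_pmf (merge_steps p m (insert (a \<union> b) (L - {a, b})))"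
      using Suc.prems(2) False by (auto simp: merge_steps_Suc_nontrivial pe)
    have fin: "finite (insert (a \<union> b) (L - {a, b}))" using finL by simp
    have "card (insert (a \<union> b) (L - {a, b})) \<le> Suc (card (L - {a, b}))"
      by (rule card_insert_le_m1) auto
    also have "card (L - {a, b}) = card L - 2" using ab finL by (simp add: card_Diff_subset)
    finally have "card (insert (a \<union> b) (L - {a, b})) \<le> card L - 1" using False by linarith
    then show ?thesis using Suc.IH[OF fin in2] es False by auto
  qed
qed simp

lemma branch_singleton: "branch p t {C} = return_pmf ([], {C})"
  unfolding branch_def by (simp add: merge_steps_trivial)

lemma branch_populations: "(es, L') \<in> set_pmf (branch p t L) \<Longrightarrow> \<forall>v\<in>set es. fst v = Some p"
  unfolding branch_def using merge_steps_populations by fastforce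

definition A_merge :: "cnode event \<Rightarrow> bool" where
  "A_merge v = (A \<in> fst (snd v) \<or> A \<in> snd (snd v))"

definition merged_cluster :: "cnode event \<Rightarrow> cnode set" where
  "merged_cluster v = fst (snd v) \<union> snd (snd v)"

definition A_merges :: "cnode event list \<Rightarrow> nat" where
  "A_merges es = length (filter A_merge es)"

lemma A_merges_append: "A_merges (e @ es) = A_merges e + A_merges es"
  by (simp add: A_merges_def)

lemma Xcnt_append: "Xcnt i (e @ es, x) = Xcnt i (e, x') + Xcnt i (es, x'')"
  by (simp add: Xcnt_def)

lemma Xcnt_eq_0: "\<forall>v\<in>set es. fst v \<noteq> Some (W i) \<and> fst v \<noteq> Some (Z i) \<Longrightarrow> Xcnt i (es, x) = 0"
  unfolding Xcnt_def by (auto simp: filter_empty_conv split_beta)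

lemma Xcnt_eq_A_merges:
  "\<forall>v\<in>set es. fst v = Some (W i) \<or> fst v = Some (Z i) \<Longrightarrow> Xcnt i (es, x) = A_merges es"
  unfolding Xcnt_def A_merges_def A_merge_def
  by (rule arg_cong[where f = length], rule filter_cong) (auto simp: split_beta)

text \<open>Since the clusters merged into the a-lineage are distinct and none is the leaf a itself,
  each such merge contributes its own edge to the a--b path.\<close>
definition clusters_distinct_within :: "cnode set \<Rightarrow> cnode event list \<Rightarrow> bool" where
  "clusters_distinct_within S e =
     ((\<forall>v\<in>set e. merged_cluster v \<subseteq> S) \<and> distinct (map merged_cluster (filter A_merge e))
      \<and> {A} \<notin> merged_cluster ` set (filter A_merge e))"

definition block_pmf :: "'l \<Rightarrow> 'l \<Rightarrow> real \<Rightarrow> real \<Rightarrow> 'l set set \<Rightarrow> 'l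
    \<Rightarrow> ('l event list \<times> 'l set set \<times> 'l set set) pmf" where
  "block_pmf p q t1 t2 L y = bind_pmf (branch p t1 L) (\<lambda>(f1, L1).
      map_pmf (\<lambda>(f2, L2). (f1 @ f2, L1, L2)) (branch q t2 (insert {y} L1)))"

lemma block_pmf_populations:
  "(es, L1, L2) \<in> set_pmf (block_pmf p q t1 t2 L y) \<Longrightarrow> \<forall>v\<in>set es. fst v = Some p \<or> fst v = Some q"
  unfolding block_pmf_def using branch_populations by fastforce

definition block_shape :: "cnode set \<Rightarrow> cnode \<Rightarrow> cnode \<Rightarrow> cnode event list \<Rightarrow> cnode set set \<Rightarrow> bool" where
  "block_shape C x y es L2 =
     (L2 = {insert x (insert y C)} \<and> (\<forall>v\<in>set es. merged_cluster v \<subseteq> insert x (insert y C))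
      \<and> distinct (map merged_cluster (filter A_merge es))
      \<and> (\<forall>v\<in>set (filter A_merge es). x \<in> merged_cluster v \<or> y \<in> merged_cluster v))"

definition block_summary ::
  "cnode set \<Rightarrow> cnode \<Rightarrow> cnode \<Rightarrow> cnode event list \<Rightarrow> cnode set set \<Rightarrow> bool \<times> nat \<times> bool" where
  "block_summary C x y es L2 = (card L2 = 1, A_merges es, card L2 = 1 \<longrightarrow> block_shape C x y es L2)"

text \<open>The laws of a block summary, read off the coalescences: m1 in (w_i, z_i) among the two
  entering lineages, then m2 in (z_i, w_(i+1)) among the three or two lineages there. The third
  component is constantly True, so the law also certifies block_shape on the support.\<close>
definition block_law_three :: "real \<Rightarrow> (bool \<times> nat \<times> bool) pmf" where
  "block_law_three t2 = bind_pmf (coal_count 3 t2) (\<lambda>m2.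
     if m2 = 0 then return_pmf (False, 0, True)
     else if m2 = 1 then map_pmf (\<lambda>(i, j). (False, if i = 0 \<or> j = 0 then 1 else 0, True)) pairs3
     else map_pmf (\<lambda>(i, j). (True, if i = 0 \<or> j = 0 then 2 else 1, True)) pairs3)"

definition block_law_pair :: "real \<Rightarrow> (bool \<times> nat \<times> bool) pmf" where
  "block_law_pair t2 = bind_pmf (coal_count 2 t2) (\<lambda>m2.
     if m2 = 0 then return_pmf (False, 1, True) else return_pmf (True, 2, True))"

definition block_law :: "real \<Rightarrow> real \<Rightarrow> (bool \<times> nat \<times> bool) pmf" where
  "block_law t1 t2 = bind_pmf (coal_count 2 t1) (\<lambda>m1.
     if m1 = 0 then block_law_three t2 else block_law_pair t2)"

locale block_lineages =
  fixes C :: "cnode set" and x y :: cnode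
  assumes A_in_C: "A \<in> C" and x_notin_C: "x \<notin> C" and y_notin_C: "y \<notin> C" and x_neq_y: "x \<noteq> y"
begin

lemma A_neq_x: "A \<noteq> x" and A_neq_y: "A \<noteq> y"
  using A_in_C x_notin_C y_notin_C by auto

lemma C_neq_x: "C \<noteq> {x}" and C_neq_y: "C \<noteq> {y}"
  using A_in_C A_neq_x A_neq_y by auto

lemmas distinctness = A_in_C x_notin_C y_notin_C x_neq_y A_neq_x A_neq_y C_neq_x C_neq_y

lemma block_summary_one_merge:
  assumes "(i, j) \<in> pairs3_set"
  shows "map_pmf (\<lambda>(es, L2). block_summary C x y es L2) (merge_pair_then (Some q) C x y i j 0)
       = return_pmf (False, if i = 0 \<or> j = 0 then 1 else 0, True)"
  using assms distinctness
  by (auto simp: merge_pair_then_def pairs3_set_def lineage3_def block_summary_def A_merges_def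
                 A_merge_def insert_Diff_if card_insert_if)

lemma merge_in_triple:
  assumes "(i, j) \<in> pairs3_set"
  shows "insert (lineage3 C x y i \<union> lineage3 C x y j) ({C, {x}, {y}} - {lineage3 C x y i, lineage3 C x y j})
       = {lineage3 C x y i \<union> lineage3 C x y j, lineage3 C x y (3 - i - j)}"
    and "lineage3 C x y i \<union> lineage3 C x y j \<noteq> lineage3 C x y (3 - i - j)"
  using assms distinctness by (auto simp: pairs3_set_def lineage3_def)

lemma block_summary_two_merges:
  assumes "(i, j) \<in> pairs3_set"
  shows "map_pmf (\<lambda>(es, L2). block_summary C x y es L2) (merge_pair_then (Some q) C x y i j (Suc m))
       = return_pmf (True, if i = 0 \<or> j = 0 then 2 else 1, True)"
  unfolding merge_pair_then_def merge_in_triple(1)[OF assms] map_pmf_comp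
  apply (rule map_merge_steps_pair_const[OF merge_in_triple(2)[OF assms]])
  using pairs3_cases[OF assms] distinctness
  apply (elim disjE conjE)
       apply (simp_all add: lineage3_def block_summary_def A_merges_def A_merge_def)
  apply (elim disjE conjE; simp only:)
  apply safe
  apply (simp_all add: block_shape_def merged_cluster_def A_merge_def insert_commute)
  apply (auto simp: set_eq_iff)
  done

lemma map_block_summary_three:
  "map_pmf (\<lambda>(es, L2). block_summary C x y es L2) (branch q t2 {C, {x}, {y}}) = block_law_three t2"
proof -
  have c3: "card {C, {x}, {y}} = 3" using C_neq_x C_neq_y x_neq_y by auto
  show ?thesis
    unfolding branch_def c3 map_bind_pmf block_law_three_def
  proof (rule bind_pmf_cong[OF refl])
    fix m2 :: nat
    show "map_pmf (\<lambda>(es, L2). block_summary C x y es L2) (merge_steps (Some q) m2 {C, {x}, {y}}) =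
      (if m2 = 0 then return_pmf (False, 0, True)
       else if m2 = 1 then map_pmf (\<lambda>(i, j). (False, if i = 0 \<or> j = 0 then 1 else 0, True)) pairs3
       else map_pmf (\<lambda>(i, j). (True, if i = 0 \<or> j = 0 then 2 else 1, True)) pairs3)"
    proof (cases m2)
      case 0
      then show ?thesis using c3 by (simp add: block_summary_def A_merges_def)
    next
      case (Suc m')
      have e: "map_pmf (\<lambda>(es, L2). block_summary C x y es L2) (merge_steps (Some q) m2 {C, {x}, {y}})
          = bind_pmf pairs3 (\<lambda>(i, j).
              map_pmf (\<lambda>(es, L2). block_summary C x y es L2) (merge_pair_then (Some q) C x y i j m'))"
        unfolding Suc merge_steps_triple[OF C_neq_x C_neq_y x_neq_y] map_bind_pmf
        by (rule bind_pmf_cong) auto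
      show ?thesis
      proof (cases m')
        case 0
        have "bind_pmf pairs3 (\<lambda>(i, j).
              map_pmf (\<lambda>(es, L2). block_summary C x y es L2) (merge_pair_then (Some q) C x y i j m'))
            = bind_pmf pairs3 (\<lambda>ij. return_pmf ((\<lambda>(i, j). (False, if i = 0 \<or> j = 0 then 1 else 0, True)) ij))"
          unfolding 0 by (rule bind_pmf_cong[OF refl]) (auto simp: block_summary_one_merge)
        then show ?thesis using e Suc 0 by (simp add: map_pmf_def)
      next
        case (Suc m'')
        have "bind_pmf pairs3 (\<lambda>(i, j).
              map_pmf (\<lambda>(es, L2). block_summary C x y es L2) (merge_pair_then (Some q) C x y i j m'))
            = bind_pmf pairs3 (\<lambda>ij. return_pmf ((\<lambda>(i, j). (True, if i = 0 \<or> j = 0 then 2 else 1, True)) ij))"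
          unfolding Suc by (rule bind_pmf_cong[OF refl]) (auto simp: block_summary_two_merges)
        then show ?thesis using e \<open>m2 = Suc m'\<close> Suc by (simp add: map_pmf_def)
      qed
    qed
  qed
qed

lemma map_block_summary_pair:
  assumes ab: "(a, b) \<in> {(C, {x}), ({x}, C)}"
  shows "map_pmf (\<lambda>(f2, L2). block_summary C x y ((Some p, a, b) # f2) L2) (branch q t2 (insert {y} {C \<union> {x}}))
       = block_law_pair t2"
proof -
  have ne: "{y} \<noteq> C \<union> {x}" using A_in_C A_neq_y by auto
  have c2: "card (insert {y} {C \<union> {x}}) = 2" using ne by auto
  show ?thesis
    unfolding branch_def c2 map_bind_pmf block_law_pair_def
  proof (rule bind_pmf_cong[OF refl])
    fix m2 :: nat
    show "map_pmf (\<lambda>(f2, L2). block_summary C x y ((Some p, a, b) # f2) L2)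
        (merge_steps (Some q) m2 (insert {y} {C \<union> {x}}))
      = (if m2 = 0 then return_pmf (False, 1, True) else return_pmf (True, 2, True))"
    proof (cases m2)
      case 0
      then show ?thesis using c2 ab A_in_C by (auto simp: block_summary_def A_merges_def A_merge_def)
    next
      case (Suc m')
      have "map_pmf (\<lambda>(f2, L2). block_summary C x y ((Some p, a, b) # f2) L2)
          (merge_steps (Some q) (Suc m') (insert {y} {C \<union> {x}})) = return_pmf (True, 2, True)"
        by (rule map_merge_steps_pair_const[OF ne])
           (use ab distinctness in \<open>auto simp: block_summary_def A_merges_def A_merge_def
                                       block_shape_def merged_cluster_def\<close>)
      then show ?thesis unfolding Suc by simp
    qed
  qed
qed

lemma map_block_summary_block_pmf:
  "map_pmf (\<lambda>(es, L1, L2). block_summary C x y es L2) (block_pmf p q t1 t2 {C, {x}} y) = block_law t1 t2"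
proof -
  have c2: "card {C, {x}} = 2" using C_neq_x by auto
  show ?thesis
    unfolding block_pmf_def branch_def[of p] c2 bind_assoc_pmf block_law_def
  proof (subst map_bind_pmf, rule bind_pmf_cong[OF refl])
    fix m1 :: nat
    show "map_pmf (\<lambda>(es, L1, L2). block_summary C x y es L2)
        (bind_pmf (merge_steps (Some p) m1 {C, {x}}) (\<lambda>(f1, L1).
           map_pmf (\<lambda>(f2, L2). (f1 @ f2, L1, L2)) (branch q t2 (insert {y} L1))))
      = (if m1 = 0 then block_law_three t2 else block_law_pair t2)"
    proof (cases m1)
      case 0
      have "insert {y} {C, {x}} = {C, {x}, {y}}" by auto
      then show ?thesis
        using 0 map_block_summary_three[of q t2, symmetric]
        by (auto simp: bind_return_pmf map_pmf_comp intro!: map_pmf_cong)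
    next
      case (Suc m)
      have pair_law: "map_pmf (\<lambda>s. block_summary C x y ((Some p, a, b) # fst s) (snd s))
          (branch q t2 (insert {y} {C \<union> {x}})) = block_law_pair t2"
        if "(a, b) \<in> {(C, {x}), ({x}, C)}" for a b
        using map_block_summary_pair[OF that, of p q t2] by (simp add: case_prod_unfold)
      have "map_pmf (\<lambda>(es, L1, L2). block_summary C x y es L2)
          (bind_pmf (merge_steps (Some p) m1 {C, {x}}) (\<lambda>(f1, L1).
             map_pmf (\<lambda>(f2, L2). (f1 @ f2, L1, L2)) (branch q t2 (insert {y} L1))))
        = bind_pmf (pmf_of_set {(C, {x}), ({x}, C)}) (\<lambda>_. block_law_pair t2)"
        unfolding Suc merge_steps_pair[OF C_neq_x] map_bind_pmf bind_map_pmf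
        using pair_law[of C "{x}", simplified] pair_law[of "{x}" C, simplified]
        by (intro bind_pmf_cong[OF refl]) (auto simp: map_pmf_comp case_prod_unfold)
      then show ?thesis using Suc by simp
    qed
  qed
qed

end

lemma set_block_law: "set_pmf (block_law t1 t2) \<subseteq> {(b, c, True) | b c. c \<le> 2}"
  unfolding block_law_def block_law_three_def block_law_pair_def
  by (auto simp: pairs3_set_def split: if_splits)

definition block_outcome :: "real \<Rightarrow> real \<Rightarrow> (bool \<times> nat) pmf" where
  "block_outcome t1 t2 = map_pmf (\<lambda>(b, c, _). (b, c)) (block_law t1 t2)"

lemma finite_block_outcome: "finite (set_pmf (block_outcome t1 t2))"
proof -
  have "set_pmf (block_outcome t1 t2) \<subseteq> UNIV \<times> {..2}"
    using set_block_law[of t1 t2] unfolding block_outcome_def by auto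
  then show ?thesis by (rule finite_subset) auto
qed

lemma block_shape_of_coalesced:
  assumes "A \<in> C" "x \<notin> C" "y \<notin> C" "x \<noteq> y"
    and "(es, L1, L2) \<in> set_pmf (block_pmf p q t1 t2 {C, {x}} y)" and "card L2 = 1"
  shows "block_shape C x y es L2"
proof -
  interpret block_lineages C x y using assms(1-4) by unfold_locales
  have "block_summary C x y es L2 \<in> set_pmf (block_law t1 t2)"
    using assms(5) map_block_summary_block_pmf[of p q t1 t2, symmetric] by (force simp: set_map_pmf)
  then show ?thesis using set_block_law assms(6) by (auto simp: block_summary_def)
qed

lemma clusters_distinct_within_append:
  assumes old: "clusters_distinct_within S e" and shape: "block_shape S x y es L2"
    and "x \<notin> S" "y \<notin> S" "A \<in> S"
  shows "clusters_distinct_within (insert x (insert y S)) (e @ es)"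
proof -
  have sub: "\<forall>v\<in>set e. merged_cluster v \<subseteq> S" and dold: "distinct (map merged_cluster (filter A_merge e))"
    and Aold: "{A} \<notin> merged_cluster ` set (filter A_merge e)"
    using old unfolding clusters_distinct_within_def by auto
  have new: "\<forall>v\<in>set es. merged_cluster v \<subseteq> insert x (insert y S)"
    and dnew: "distinct (map merged_cluster (filter A_merge es))"
    and xy: "\<forall>v\<in>set (filter A_merge es). x \<in> merged_cluster v \<or> y \<in> merged_cluster v"
    using shape unfolding block_shape_def by auto
  have "set (map merged_cluster (filter A_merge e)) \<inter> set (map merged_cluster (filter A_merge es)) = {}"
    using sub xy assms(3,4) by fastforce
  then have "distinct (map merged_cluster (filter A_merge (e @ es)))"
    using dold dnew by simp
  moreover have "{A} \<notin> merged_cluster ` set (filter A_merge es)"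
  proof
    assume "{A} \<in> merged_cluster ` set (filter A_merge es)"
    then obtain v where v: "v \<in> set (filter A_merge es)" "merged_cluster v = {A}" by auto
    then have "x = A \<or> y = A" using xy by fastforce
    then show False using assms(3-5) by auto
  qed
  moreover have "\<forall>v\<in>set (e @ es). merged_cluster v \<subseteq> insert x (insert y S)"
    using sub new by fastforce
  ultimately show ?thesis
    using Aold unfolding clusters_distinct_within_def by auto
qed

definition wt_leaf :: "real \<Rightarrow> real \<Rightarrow> nat \<Rightarrow> cnode \<Rightarrow> cnode stree" where
  "wt_leaf f g j b = Nd (W (j + 2)) (Nd (Z (j + 1)) (wt f g j) f (Lf (Y (j + 1))) g) g (Lf b) g"

lemma label_wt [simp]: "label (wt f g j) = W (j + 1)"
  by (cases j) auto

lemma wt_Suc: "wt f g (Suc j) = wt_leaf f g j (X (j + 2))"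
  by (simp add: wt_leaf_def)

definition exits_update ::
  "nat \<Rightarrow> cnode \<Rightarrow> (cnode \<Rightarrow> cnode set set) \<Rightarrow> cnode set set \<Rightarrow> cnode set set \<Rightarrow> cnode \<Rightarrow> cnode set set" where
  "exits_update j b x L1 L2 = x(W (j + 1) := L1, Y (j + 1) := {{Y (j + 1)}}, Z (j + 1) := L2, b := {{b}})"

lemma sim_wt_leaf:
  "sim (wt_leaf f g j b) = bind_pmf (sim (wt f g j)) (\<lambda>(e, x, L).
     map_pmf (\<lambda>(es, L1, L2). (e @ es, exits_update j b x L1 L2, insert {b} L2))
       (block_pmf (W (j + 1)) (Z (j + 1)) f g L (Y (j + 1))))"
  by (simp add: wt_leaf_def block_pmf_def branch_singleton bind_return_pmf bind_assoc_pmf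
      map_bind_pmf bind_map_pmf split_beta map_pmf_def exits_update_def)
     (intro bind_pmf_cong refl, auto simp: case_prod_unfold)

lemma sim_wt0:
  "sim (wt f g 0) = return_pmf ([], (\<lambda>w. {} \<union> {})(A := {{A}}, X 1 := {{X 1}}), {{A}} \<union> {{X 1}})"
  by (simp add: branch_singleton bind_return_pmf)

lemma map_sim_wt_leaf_eq:
  assumes "\<And>e x L es L1 L2. (e, x, L) \<in> set_pmf (sim (wt f g j))
      \<Longrightarrow> (es, L1, L2) \<in> set_pmf (block_pmf (W (j + 1)) (Z (j + 1)) f g L (Y (j + 1)))
      \<Longrightarrow> h (e @ es, exits_update j b x L1 L2, insert {b} L2) = h' (e, x, L)"
  shows "map_pmf h (sim (wt_leaf f g j b)) = map_pmf h' (sim (wt f g j))"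
  unfolding sim_wt_leaf map_bind_pmf map_pmf_def[of h']
proof (rule bind_pmf_cong[OF refl])
  fix \<omega> assume om: "\<omega> \<in> set_pmf (sim (wt f g j))"
  obtain e x L where o: "\<omega> = (e, x, L)" by (cases \<omega>) auto
  let ?blk = "block_pmf (W (j + 1)) (Z (j + 1)) f g L (Y (j + 1))"
  have "map_pmf h (map_pmf (\<lambda>(es, L1, L2). (e @ es, exits_update j b x L1 L2, insert {b} L2)) ?blk)
      = map_pmf (\<lambda>_. h' \<omega>) ?blk"
    unfolding map_pmf_comp by (rule map_pmf_cong[OF refl]) (use assms om o in auto)
  then show "map_pmf h ((\<lambda>(e, x, L). map_pmf (\<lambda>(es, L1, L2). (e @ es, exits_update j b x L1 L2, insert {b} L2))
      (block_pmf (W (j + 1)) (Z (j + 1)) f g L (Y (j + 1)))) \<omega>) = return_pmf (h' \<omega>)"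
    unfolding o by simp
qed

definition lower_taxa :: "nat \<Rightarrow> cnode set" where
  "lower_taxa j = insert A (X ` {1..j} \<union> Y ` {1..j})"

lemma lower_taxa_Suc: "lower_taxa (Suc j) = insert (X (Suc j)) (insert (Y (Suc j)) (lower_taxa j))"
  by (auto simp: lower_taxa_def)

lemma lower_taxa_facts: "A \<in> lower_taxa j" "X (Suc j) \<notin> lower_taxa j" "Y (Suc j) \<notin> lower_taxa j"
  "B \<notin> lower_taxa j"
  by (auto simp: lower_taxa_def)

lemma leaves_wt: "leaves (wt f g j) = insert (X (Suc j)) (lower_taxa j)"
  by (induction j) (auto simp: lower_taxa_def lower_taxa_Suc)

lemma leaves_wt_leaf: "leaves (wt_leaf f g j b) = insert b (lower_taxa (Suc j))"
  by (auto simp: wt_leaf_def leaves_wt lower_taxa_Suc)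

definition blocks_coalesced :: "nat \<Rightarrow> (cnode \<Rightarrow> cnode set set) \<Rightarrow> bool" where
  "blocks_coalesced j x = (\<forall>i\<in>{1..j}. card (x (Z i)) = 1)"

lemma blocks_coalesced_exits_update:
  assumes "\<forall>i. b \<noteq> Z i"
  shows "blocks_coalesced (Suc j) (exits_update j b x L1 L2) = (blocks_coalesced j x \<and> card L2 = 1)"
  using assms unfolding blocks_coalesced_def exits_update_def by (auto simp: le_Suc_eq)

definition wt_invariant ::
  "nat \<Rightarrow> cnode \<Rightarrow> cnode event list \<times> (cnode \<Rightarrow> cnode set set) \<times> cnode set set \<Rightarrow> bool" where
  "wt_invariant j b \<omega> = (blocks_coalesced j (fst (snd \<omega>)) \<longrightarrow>
     snd (snd \<omega>) = {lower_taxa j, {b}} \<and> clusters_distinct_within (lower_taxa j) (fst \<omega>))"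

lemma wt_invariant_step:
  assumes bZ: "\<forall>i. b \<noteq> Z i"
    and I: "\<forall>\<omega>\<in>set_pmf (sim (wt f g j)). wt_invariant j (X (Suc j)) \<omega>"
  shows "\<forall>\<omega>\<in>set_pmf (sim (wt_leaf f g j b)). wt_invariant (Suc j) b \<omega>"
proof
  fix \<omega> assume "\<omega> \<in> set_pmf (sim (wt_leaf f g j b))"
  then obtain e x L es L1 L2 where eL: "(e, x, L) \<in> set_pmf (sim (wt f g j))"
    and bl: "(es, L1, L2) \<in> set_pmf (block_pmf (W (j + 1)) (Z (j + 1)) f g L (Y (j + 1)))"
    and om: "\<omega> = (e @ es, exits_update j b x L1 L2, insert {b} L2)"
    unfolding sim_wt_leaf by auto
  show "wt_invariant (Suc j) b \<omega>"
    unfolding wt_invariant_def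
  proof
    assume "blocks_coalesced (Suc j) (fst (snd \<omega>))"
    then have G: "blocks_coalesced j x" and c1: "card L2 = 1"
      using blocks_coalesced_exits_update[OF bZ] om by auto
    from I eL G have L: "L = {lower_taxa j, {X (Suc j)}}"
      and old: "clusters_distinct_within (lower_taxa j) e"
      unfolding wt_invariant_def by auto
    have "block_shape (lower_taxa j) (X (Suc j)) (Y (Suc j)) es L2"
      using bl c1 unfolding L
      by (intro block_shape_of_coalesced[OF lower_taxa_facts(1-3)]) simp_all
    then show "snd (snd \<omega>) = {lower_taxa (Suc j), {b}}
        \<and> clusters_distinct_within (lower_taxa (Suc j)) (fst \<omega>)"
      using clusters_distinct_within_append[OF old _ lower_taxa_facts(2,3,1)] om
      unfolding lower_taxa_Suc by (auto simp: block_shape_def)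
  qed
qed

definition walk_stats ::
  "nat \<Rightarrow> cnode event list \<times> (cnode \<Rightarrow> cnode set set) \<times> cnode set set \<Rightarrow> bool \<times> nat" where
  "walk_stats j \<omega> = (blocks_coalesced j (fst (snd \<omega>)),
     if blocks_coalesced j (fst (snd \<omega>)) then A_merges (fst \<omega>) else 0)"

lemma map_walk_stats_block:
  assumes bZ: "\<forall>i. b \<noteq> Z i" and I: "wt_invariant j (X (Suc j)) (e, x, L)"
  shows "map_pmf (walk_stats (Suc j)) (map_pmf (\<lambda>(es, L1, L2). (e @ es, exits_update j b x L1 L2, insert {b} L2))
      (block_pmf (W (j + 1)) (Z (j + 1)) f g L (Y (j + 1))))
    = killed_step (block_outcome f g) (walk_stats j (e, x, L))"
proof (cases "blocks_coalesced j x")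
  case True
  let ?blk = "block_pmf (W (j + 1)) (Z (j + 1)) f g L (Y (j + 1))"
  have L: "L = {lower_taxa j, {X (Suc j)}}"
    using I True unfolding wt_invariant_def by auto
  interpret block_lineages "lower_taxa j" "X (Suc j)" "Y (Suc j)"
    using lower_taxa_facts by unfold_locales auto
  have "killed_step (block_outcome f g) (walk_stats j (e, x, L))
      = map_pmf (\<lambda>(b', x', _). (b', if b' then A_merges e + x' else 0)) (block_law f g)"
    using True by (auto simp: killed_step_def walk_stats_def block_outcome_def map_pmf_comp
                        intro!: map_pmf_cong)
  also have "\<dots> = map_pmf (\<lambda>(b', x', _). (b', if b' then A_merges e + x' else 0))
      (map_pmf (\<lambda>(es, L1, L2). block_summary (lower_taxa j) (X (Suc j)) (Y (Suc j)) es L2) ?blk)"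
    by (simp add: L map_block_summary_block_pmf)
  also have "\<dots> = map_pmf (walk_stats (Suc j))
      (map_pmf (\<lambda>(es, L1, L2). (e @ es, exits_update j b x L1 L2, insert {b} L2)) ?blk)"
    unfolding map_pmf_comp
    by (rule map_pmf_cong[OF refl])
       (auto simp: walk_stats_def block_summary_def A_merges_append blocks_coalesced_exits_update[OF bZ] True)
  finally show ?thesis ..
next
  case False
  let ?blk = "block_pmf (W (j + 1)) (Z (j + 1)) f g L (Y (j + 1))"
  have "map_pmf (walk_stats (Suc j))
      (map_pmf (\<lambda>(es, L1, L2). (e @ es, exits_update j b x L1 L2, insert {b} L2)) ?blk)
      = map_pmf (\<lambda>_. (False, 0)) ?blk"
    unfolding map_pmf_comp
    by (rule map_pmf_cong[OF refl]) (auto simp: walk_stats_def blocks_coalesced_exits_update[OF bZ] False)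
  then show ?thesis
    using False by (simp add: killed_step_def walk_stats_def)
qed

lemma map_walk_stats_wt_leaf:
  assumes bZ: "\<forall>i. b \<noteq> Z i"
    and I: "\<forall>\<omega>\<in>set_pmf (sim (wt f g j)). wt_invariant j (X (Suc j)) \<omega>"
  shows "map_pmf (walk_stats (Suc j)) (sim (wt_leaf f g j b))
       = map_pmf (walk_stats j) (sim (wt f g j)) \<bind> killed_step (block_outcome f g)"
proof -
  have "map_pmf (walk_stats (Suc j)) (sim (wt_leaf f g j b))
      = sim (wt f g j) \<bind> (\<lambda>\<omega>. killed_step (block_outcome f g) (walk_stats j \<omega>))"
    unfolding sim_wt_leaf map_bind_pmf
    by (rule bind_pmf_cong[OF refl]) (use I map_walk_stats_block[OF bZ] in auto)
  then show ?thesis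
    by (simp add: bind_map_pmf)
qed

lemma wt_invariant_and_walk:
  "(\<forall>\<omega>\<in>set_pmf (sim (wt f g j)). wt_invariant j (X (Suc j)) \<omega>)
   \<and> map_pmf (walk_stats j) (sim (wt f g j)) = killed_walk (block_outcome f g) j"
proof (induction j)
  case 0
  have "lower_taxa 0 = {A}" by (simp add: lower_taxa_def)
  then show ?case
    unfolding sim_wt0
    by (simp add: wt_invariant_def walk_stats_def blocks_coalesced_def A_merges_def
                  clusters_distinct_within_def insert_commute)
next
  case (Suc j)
  have bZ: "\<forall>i. X (j + 2) \<noteq> Z i" by simp
  from Suc.IH have I: "\<forall>\<omega>\<in>set_pmf (sim (wt f g j)). wt_invariant j (X (Suc j)) \<omega>"
    and walk: "map_pmf (walk_stats j) (sim (wt f g j)) = killed_walk (block_outcome f g) j"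
    by auto
  show ?case
    unfolding wt_Suc using wt_invariant_step[OF bZ I] map_walk_stats_wt_leaf[OF bZ I] walk by simp
qed

definition first_block_stats ::
  "cnode event list \<times> (cnode \<Rightarrow> cnode set set) \<times> cnode set set \<Rightarrow> bool \<times> nat" where
  "first_block_stats \<omega> = (card (fst (snd \<omega>) (Z 1)) = 1, Xcnt 1 (fst \<omega>, fst (snd \<omega>)))"

lemma map_first_block_stats_wt_leaf_0:
  assumes "\<forall>i. b \<noteq> Z i"
  shows "map_pmf first_block_stats (sim (wt_leaf f g 0 b)) = block_outcome f g"
proof -
  interpret block_lineages "{A}" "X 1" "Y 1" by unfold_locales auto
  let ?blk = "block_pmf (W 1) (Z 1) f g {{A}, {X 1}} (Y 1)"
  let ?x0 = "(\<lambda>w. {})(A := {{A}}, X 1 := {{X 1}})"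
  have sim0: "sim (wt_leaf f g 0 b)
      = map_pmf (\<lambda>(es, L1, L2). (es, exits_update 0 b ?x0 L1 L2, insert {b} L2)) ?blk"
    unfolding sim_wt_leaf sim_wt0 by (simp add: bind_return_pmf insert_commute)
  have "map_pmf first_block_stats (sim (wt_leaf f g 0 b))
      = map_pmf (\<lambda>(es, L1, L2). (card L2 = 1, A_merges es)) ?blk"
    unfolding sim0 map_pmf_comp
  proof (rule map_pmf_cong[OF refl])
    fix s assume s: "s \<in> set_pmf ?blk"
    obtain es L1 L2 where s_eq: "s = (es, L1, L2)" by (cases s) auto
    have "Z 1 \<noteq> b" using assms by metis
    then have "exits_update 0 b ?x0 L1 L2 (Z 1) = L2"
      by (simp add: exits_update_def)
    moreover have "Xcnt 1 (es, x) = A_merges es" for x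
      using block_pmf_populations[OF s[unfolded s_eq]] by (intro Xcnt_eq_A_merges) auto
    ultimately show "first_block_stats ((\<lambda>(es, L1, L2). (es, exits_update 0 b ?x0 L1 L2, insert {b} L2)) s)
      = (\<lambda>(es, L1, L2). (card L2 = 1, A_merges es)) s"
      by (simp add: s_eq first_block_stats_def)
  qed
  also have "\<dots> = map_pmf (\<lambda>(b, c, _). (b, c))
      (map_pmf (\<lambda>(es, L1, L2). block_summary {A} (X 1) (Y 1) es L2) ?blk)"
    unfolding map_pmf_comp by (rule map_pmf_cong) (auto simp: block_summary_def)
  also have "\<dots> = block_outcome f g"
    unfolding map_block_summary_block_pmf block_outcome_def ..
  finally show ?thesis .
qed

lemma map_first_block_stats_wt_leaf:
  "\<forall>i. b \<noteq> Z i \<Longrightarrow> map_pmf first_block_stats (sim (wt_leaf f g j b)) = block_outcome f g"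
proof (induction j arbitrary: b)
  case 0
  then show ?case by (rule map_first_block_stats_wt_leaf_0)
next
  case (Suc j)
  have "map_pmf first_block_stats (sim (wt_leaf f g (Suc j) b))
      = map_pmf first_block_stats (sim (wt f g (Suc j)))"
  proof (rule map_sim_wt_leaf_eq)
    fix e x L es L1 L2
    assume "(es, L1, L2) \<in> set_pmf (block_pmf (W (Suc j + 1)) (Z (Suc j + 1)) f g L (Y (Suc j + 1)))"
    then have "Xcnt 1 (es, x) = 0"
      using block_pmf_populations by (intro Xcnt_eq_0) fastforce
    moreover have "Z 1 \<noteq> b" using Suc.prems by metis
    ultimately show "first_block_stats (e @ es, exits_update (Suc j) b x L1 L2, insert {b} L2)
        = first_block_stats (e, x, L)"
      by (simp add: first_block_stats_def exits_update_def Xcnt_append[where x' = x and x'' = x])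
  qed
  then show ?case
    unfolding wt_Suc using Suc.IH[of "X (j + 2)"] by simp
qed

lemma map_msc_eq_map_sim:
  assumes "\<And>e x L es L'. (e, x, L) \<in> set_pmf (sim T)
      \<Longrightarrow> (es, L') \<in> set_pmf (merge_steps None (card L - 1) L) \<Longrightarrow> h (e @ es, x) = h' (e, x, L)"
  shows "map_pmf h (msc T) = map_pmf h' (sim T)"
  unfolding msc_def map_bind_pmf map_pmf_def[of h']
proof (rule bind_pmf_cong[OF refl])
  fix \<omega> assume om: "\<omega> \<in> set_pmf (sim T)"
  obtain e x L where o: "\<omega> = (e, x, L)" by (cases \<omega>) auto
  have "map_pmf h (map_pmf (\<lambda>(es, L'). (e @ es, x)) (merge_steps None (card L - 1) L))
      = map_pmf (\<lambda>_. h' \<omega>) (merge_steps None (card L - 1) L)"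
    unfolding map_pmf_comp by (rule map_pmf_cong[OF refl]) (use assms om o in auto)
  then show "map_pmf h ((\<lambda>(e, x, L). map_pmf (\<lambda>(es, L'). (e @ es, x)) (merge_steps None (card L - 1) L)) \<omega>)
      = return_pmf (h' \<omega>)"
    unfolding o by simp
qed

lemma map_msc_first_block:
  "map_pmf (\<lambda>\<omega>. (\<omega> \<in> Fev 1, Xcnt 1 \<omega>)) (msc T) = map_pmf first_block_stats (sim T)"
proof (rule map_msc_eq_map_sim)
  fix e es :: "cnode event list" and x L L'
  assume m: "(es, L') \<in> set_pmf (merge_steps None (card L - 1) L)"
  have "Xcnt 1 (es, x) = 0"
    using merge_steps_populations[OF m] by (intro Xcnt_eq_0) auto
  then show "((e @ es, x) \<in> Fev 1, Xcnt 1 (e @ es, x)) = first_block_stats (e, x, L)"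
    using Xcnt_append[of 1 e es x x x] by (simp add: Fev_def first_block_stats_def)
qed

lemma gt_dist_root_merge:
  assumes old: "clusters_distinct_within S e" and AS: "A \<in> S" and BS: "B \<notin> S"
    and top: "a \<union> b = insert B S" "A \<in> a \<or> A \<in> b"
  shows "gt_dist (insert B S) (e @ [(None, a, b)]) A B = 1 + A_merges e"
proof -
  have sub: "\<forall>v\<in>set e. merged_cluster v \<subseteq> S" and d: "distinct (map merged_cluster (filter A_merge e))"
    and nA: "{A} \<notin> merged_cluster ` set (filter A_merge e)"
    using old unfolding clusters_distinct_within_def by auto
  have cl: "gt_clusters Lv evs = (\<lambda>x. {x}) ` Lv \<union> merged_cluster ` set evs" for Lv evs
    unfolding gt_clusters_def merged_cluster_def by (auto simp: image_iff split_beta)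
  let ?K = "gt_clusters (insert B S) (e @ [(None, a, b)])"
  have AB: "A \<noteq> B" using AS BS by auto
  have a_side: "{C \<in> ?K. A \<in> C \<and> B \<notin> C} = insert {A} (merged_cluster ` set (filter A_merge e))"
    using top sub BS AB AS by (auto simp: cl merged_cluster_def A_merge_def)
  have b_side: "{C \<in> ?K. B \<in> C \<and> A \<notin> C} = {{B}}"
    using top sub BS AS AB by (auto simp: cl merged_cluster_def)
  have root: "\<forall>C\<in>?K. A \<in> C \<and> B \<in> C \<longrightarrow> C = insert B S"
    using top sub BS AB by (auto simp: cl merged_cluster_def)
  have "card (insert {A} (merged_cluster ` set (filter A_merge e))) = 1 + A_merges e"
    using nA distinct_card[OF d] by (simp add: A_merges_def)
  then show ?thesis
    unfolding gt_dist_def a_side b_side using root by simp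
qed

lemma gt_dist_msc_wt_leaf:
  assumes s: "(e, x, L) \<in> set_pmf (sim (wt_leaf f g j B))" and G: "blocks_coalesced (Suc j) x"
    and m: "(es, L') \<in> set_pmf (merge_steps None (card L - 1) L)"
  shows "gt_dist (insert B (lower_taxa (Suc j))) (e @ es) A B = 1 + A_merges e"
proof -
  have "\<forall>\<omega>\<in>set_pmf (sim (wt_leaf f g j B)). wt_invariant (Suc j) B \<omega>"
    using wt_invariant_step[of B] wt_invariant_and_walk by blast
  then have L: "L = {lower_taxa (Suc j), {B}}" and old: "clusters_distinct_within (lower_taxa (Suc j)) e"
    using s G unfolding wt_invariant_def by auto
  have ne: "lower_taxa (Suc j) \<noteq> {B}" using lower_taxa_facts(1)[of "Suc j"] by auto
  then have "(es, L') \<in> set_pmf (merge_steps None (Suc 0) {lower_taxa (Suc j), {B}})"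
    using m L by simp
  then have "es = [(None, lower_taxa (Suc j), {B})] \<or> es = [(None, {B}, lower_taxa (Suc j))]"
    unfolding merge_steps_pair[OF ne] by auto
  then show ?thesis
    using gt_dist_root_merge[OF old lower_taxa_facts(1) lower_taxa_facts(4)] lower_taxa_facts(1)
    by auto
qed

lemma map_msc_wt_leaf_walk:
  "map_pmf (\<lambda>\<omega>. (blocks_coalesced (Suc j) (snd \<omega>), if blocks_coalesced (Suc j) (snd \<omega>)
       then real (gt_dist (insert B (lower_taxa (Suc j))) (fst \<omega>) A B) else 0)) (msc (wt_leaf f g j B))
   = map_pmf (\<lambda>(c, t). (c, if c then 1 + real t else 0)) (killed_walk (block_outcome f g) (Suc j))"
proof -
  have "map_pmf (\<lambda>\<omega>. (blocks_coalesced (Suc j) (snd \<omega>), if blocks_coalesced (Suc j) (snd \<omega>)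
       then real (gt_dist (insert B (lower_taxa (Suc j))) (fst \<omega>) A B) else 0)) (msc (wt_leaf f g j B))
      = map_pmf (\<lambda>(c, t). (c, if c then 1 + real t else 0))
          (map_pmf (walk_stats (Suc j)) (sim (wt_leaf f g j B)))"
    unfolding map_pmf_comp
    by (rule map_msc_eq_map_sim) (auto simp: walk_stats_def gt_dist_msc_wt_leaf)
  also have "\<dots> = map_pmf (\<lambda>(c, t). (c, if c then 1 + real t else 0)) (killed_walk (block_outcome f g) (Suc j))"
    using map_walk_stats_wt_leaf[of B] wt_invariant_and_walk by simp
  finally show ?thesis .
qed

primrec num_leaves :: "'l stree \<Rightarrow> nat" where
  "num_leaves (Lf x) = 1"
| "num_leaves (Nd v l sl r sr) = num_leaves l + num_leaves r"

lemma sim_length: "(e, x, L) \<in> set_pmf (sim T) \<Longrightarrow> finite L \<and> length e + card L \<le> num_leaves T"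
proof (induction T arbitrary: e x L)
  case (Nd v l sl r sr)
  from Nd.prems obtain e1 x1 L1 e2 x2 L2 f1 L1' f2 L2' where
    s1: "(e1, x1, L1) \<in> set_pmf (sim l)" and s2: "(e2, x2, L2) \<in> set_pmf (sim r)"
    and b1: "(f1, L1') \<in> set_pmf (branch (label l) sl L1)"
    and b2: "(f2, L2') \<in> set_pmf (branch (label r) sr L2)"
    and e: "e = e1 @ e2 @ f1 @ f2" and L: "L = L1' \<union> L2'"
    by (auto split: prod.splits)
  have i1: "finite L1 \<and> length e1 + card L1 \<le> num_leaves l" using Nd.IH(1)[OF s1] .
  have i2: "finite L2 \<and> length e2 + card L2 \<le> num_leaves r" using Nd.IH(2)[OF s2] .
  have j1: "finite L1' \<and> length f1 + card L1' \<le> card L1"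
    using b1 i1 merge_steps_length unfolding branch_def by fastforce
  have j2: "finite L2' \<and> length f2 + card L2' \<le> card L2"
    using b2 i2 merge_steps_length unfolding branch_def by fastforce
  have "card L \<le> card L1' + card L2'" unfolding L by (rule card_Un_le)
  then show ?case using i1 i2 j1 j2 e L by auto
qed simp

lemma msc_length: "\<omega> \<in> set_pmf (msc T) \<Longrightarrow> length (fst \<omega>) \<le> num_leaves T"
proof -
  assume "\<omega> \<in> set_pmf (msc T)"
  then obtain e x L es L' where s: "(e, x, L) \<in> set_pmf (sim T)"
    and m: "(es, L') \<in> set_pmf (merge_steps None (card L - 1) L)" and o: "\<omega> = (e @ es, x)"
    unfolding msc_def by auto
  have "finite L \<and> length e + card L \<le> num_leaves T" using sim_length[OF s] .
  moreover have "length es + card L' \<le> card L" using merge_steps_length m calculation by blast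
  ultimately show ?thesis using o by auto
qed

lemma gt_dist_le: "finite Lv \<Longrightarrow> gt_dist Lv evs a b \<le> 2 * (card Lv + length evs)"
proof -
  assume fin: "finite Lv"
  let ?K = "gt_clusters Lv evs"
  have fK: "finite ?K" using fin unfolding gt_clusters_def by simp
  have "card ?K \<le> card ((\<lambda>x. {x}) ` Lv) + card ((\<lambda>(p, c1, c2). c1 \<union> c2) ` set evs)"
    unfolding gt_clusters_def by (rule card_Un_le)
  also have "\<dots> \<le> card Lv + length evs"
    by (intro add_mono card_image_le fin order.trans[OF card_image_le card_length]) simp
  finally have cK: "card ?K \<le> card Lv + length evs" .
  have "card {C \<in> ?K. a \<in> C \<and> b \<notin> C} \<le> card ?K" "card {C \<in> ?K. b \<in> C \<and> a \<notin> C} \<le> card ?K"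
    by (auto intro: card_mono[OF fK])
  moreover have "gt_dist Lv evs a b \<le> card {C \<in> ?K. a \<in> C \<and> b \<notin> C} + card {C \<in> ?K. b \<in> C \<and> a \<notin> C}"
    unfolding gt_dist_def by simp
  ultimately have "gt_dist Lv evs a b \<le> card ?K + card ?K"
    by (meson add_mono order_trans)
  then show ?thesis
    using cK by simp
qed

lemma finite_leaves: "finite (leaves T)"
  by (induction T) auto

lemma dab_le:
  assumes "\<omega> \<in> set_pmf (msc (caterpillar n f))"
  shows "dab n f \<omega> \<le> 2 * (card (leaves (caterpillar n f)) + num_leaves (caterpillar n f))"
  using gt_dist_le[OF finite_leaves[of "caterpillar n f"], of "fst \<omega>" A B] msc_length[OF assms]
  unfolding dab_def by simp

lemma caterpillar_eq_wt_leaf: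
  assumes "n = 2 * j + 4"
  shows "caterpillar n f = wt_leaf f (cat_g n) j B"
proof -
  have "n div 2 = j + 2" using assms by simp
  then show ?thesis unfolding caterpillar_def wt_leaf_def Let_def by simp
qed

theorem lemma3:
  fixes n :: nat and f :: real
  assumes "n \<ge> 4" and "even n" and "f > 0"
  shows "measure_pmf.variance (msc (caterpillar n f)) (\<lambda>\<omega>. real (dab n f \<omega>))
         \<ge> (real n - 2) / 2
           * measure_pmf.variance (cond_pmf (msc (caterpillar n f)) (Fev 1)) (\<lambda>\<omega>. real (Xcnt 1 \<omega>))
           * measure_pmf.prob (msc (caterpillar n f)) (Fall n)"
proof -
  define j where "j = n div 2 - 2"
  have n: "n = 2 * j + 4"
    using assms(1,2) unfolding j_def by (auto elim!: evenE)
  have cat: "caterpillar n f = wt_leaf f (cat_g n) j B"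
    using caterpillar_eq_wt_leaf[OF n] .
  have Fall: "Fall n = {\<omega>. blocks_coalesced (Suc j) (snd \<omega>)}"
    unfolding Fall_def Fev_def blocks_coalesced_def n by auto
  have dab: "dab n f \<omega> = gt_dist (insert B (lower_taxa (Suc j))) (fst \<omega>) A B" for \<omega>
    unfolding dab_def cat leaves_wt_leaf ..
  have walk: "map_pmf (\<lambda>\<omega>. (\<omega> \<in> Fall n, if \<omega> \<in> Fall n then real (dab n f \<omega>) else 0)) (msc (caterpillar n f))
      = map_pmf (\<lambda>(c, t). (c, if c then 1 + real t else 0)) (killed_walk (block_outcome f (cat_g n)) (Suc j))"
    unfolding Fall dab cat using map_msc_wt_leaf_walk by simp
  have first: "map_pmf (\<lambda>\<omega>. (\<omega> \<in> Fev 1, Xcnt 1 \<omega>)) (msc (caterpillar n f)) = block_outcome f (cat_g n)"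
    unfolding cat map_msc_first_block by (rule map_first_block_stats_wt_leaf) simp
  have bounded: "\<bar>real (dab n f \<omega>)\<bar>
      \<le> real (2 * (card (leaves (caterpillar n f)) + num_leaves (caterpillar n f)))"
    if "\<omega> \<in> set_pmf (msc (caterpillar n f))" for \<omega>
    using dab_le[OF that] by simp
  have k: "(real n - 2) / 2 = real (Suc j)"
    using n by simp
  show ?thesis
    unfolding k by (rule variance_ge_killed_walk[OF finite_block_outcome walk first bounded])
qed

end
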